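(* Let $n=2m+2$ with $m\ge0$, let $a,b,c,d\in\mathbb{C}$, and suppose $T_n$ (degree $n$) and $U_{n-2}$ (degree at most $n-2$) satisfy $T_n^2-HU_{n-2}^2=1$ with $$T_n(z)=1-\frac{2(z-c)(z-d)\prod_{j=1}^m(z-x_j)^2}{(a-c)(a-d)\prod_{j=1}^m(a-x_j)^2}=-1+\frac{2(z-a)(z-b)\prod_{j=1}^m(z-y_j)^2}{(c-a)(c-b)\prod_{j=1}^m(c-y_j)^2}$$ for some $x_1,\dots,x_m,y_1,\dots,y_m\in\mathbb{C}$. Put $s_k:=\tfrac12\bigl(a^k-b^k+c^k+d^k\bigr)$, $k=1,\dots,2m+1$, and form $F_k,\mathbf F,\mathbf F_i$ with $\nu=m+1$, $\mu=m$. Then $\det\mathbf F\ne0$ and $x_1,\dots,x_m$ (with multiplicity) are exactly the zeros of $$x^{m}\det\mathbf F+x^{m-1}\det\mathbf F_1+\dots+x\det\mathbf F_{m-1}+\det\mathbf F_m.$$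
   Context: $H(z)=(z-a)(z-b)(z-c)(z-d)$. Given complex numbers $s_1,s_2,\dots$: $F_0:=1$, $F_k:=0$ for $k<0$, and for $k\ge1$, $F_k:=\frac{(-1)^k}{k!}\det M_k$ where $M_k$ is the $k\times k$ matrix with entry $s_{i-j+1}$ for $j\le i$, entry $i$ at position $(i,i+1)$, and $0$ elsewhere. For integers $\nu\ge0,\mu\ge0$, $\mathbf F$ is the $\mu\times\mu$ matrix with $(i,j)$ entry $F_{\nu+i-j}$, and $\mathbf F_i$ ($1\le i\le\mu$) is $\mathbf F$ with its $i$-th column replaced by $(-F_{\nu+1},\dots,-F_{\nu+\mu})^T$. Convention: if $\mu=0$, $\det\mathbf F:=1$. *)

theory Defs
  imports "HOL-Computational_Algebra.Polynomial" "Jordan_Normal_Form.Determinant"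
begin

definition Hpoly :: "complex \<Rightarrow> complex \<Rightarrow> complex \<Rightarrow> complex \<Rightarrow> complex poly" where
  "Hpoly a b c d = [:-a, 1:] * [:-b, 1:] * [:-c, 1:] * [:-d, 1:]"

definition Mmat :: "(nat \<Rightarrow> complex) \<Rightarrow> nat \<Rightarrow> complex mat" where
  "Mmat s k = mat k k (\<lambda>(i, j). if j \<le> i then s (i - j + 1)
                                 else if j = i + 1 then of_nat (i + 1) else 0)"

definition Fk :: "(nat \<Rightarrow> complex) \<Rightarrow> int \<Rightarrow> complex" where
  "Fk s k = (if k < 0 then 0 else if k = 0 then 1
             else (-1) ^ nat k / fact (nat k) * det (Mmat s (nat k)))"

definition Fmat :: "(nat \<Rightarrow> complex) \<Rightarrow> nat \<Rightarrow> nat \<Rightarrow> complex mat" where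
  "Fmat s \<nu> \<mu> = mat \<mu> \<mu> (\<lambda>(i, j). Fk s (int \<nu> + int i - int j))"

definition Fmat_i :: "(nat \<Rightarrow> complex) \<Rightarrow> nat \<Rightarrow> nat \<Rightarrow> nat \<Rightarrow> complex mat" where
  "Fmat_i s \<nu> \<mu> l = mat \<mu> \<mu> (\<lambda>(i, j). if j + 1 = l then - Fk s (int \<nu> + int i + 1)
                                         else Fk s (int \<nu> + int i - int j))"

end

theory Submission
  imports
    Defs
    "HOL-Computational_Algebra.Polynomial_FPS"
    "HOL-Computational_Algebra.Polynomial_Factorial"
    "HOL-Computational_Algebra.Field_as_Ring"
begin

text \<open>
  The numbers F_k are the Taylor coefficients of G(t) = exp(- \<Sum>k s_k t^k / k): expanding M_k
  along its last column gives Newton's identities. For s_k = (a^k - b^k + c^k + d^k)/2 this makes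
  G(t)^2 (1 - bt) = (1 - at)(1 - ct)(1 - dt). Writing X(z) = \<Prod>(z - x_j), Y(z) = \<Prod>(z - y_j) and
  equating the two expressions for T at z = 1/t gives, for the reversed polynomials
  X~(t) = t^m X(1/t) and Y~(t) = t^m Y(1/t),
    K ((1 - at)(1 - ct)(1 - dt) X~^2 - (1 - bt) ((1 - at) Y~)^2) = 2 t^(2m+2) (1 - at),
  hence X~ G - (1 - at) Y~ vanishes to order 2m + 2: (1 - at) Y~ / X~ is a Pade approximant
  of G. The coefficients of its denominator X~ solve the system F v = -(F_(m+2), ..., F_(2m+1)),
  which is nonsingular because the approximant is unique, and Cramer's rule identifies the
  polynomial of the theorem with det F * X. Only the two representations of T and its degree
  are needed.
\<close>

definition F_series :: "(nat \<Rightarrow> complex) \<Rightarrow> complex fps" where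
  "F_series s = Abs_fps (\<lambda>k. Fk s (int k))"

lemma fps_nth_F_series: "fps_nth (F_series s) k = (-1) ^ k / fact k * det (Mmat s k)"
  by (cases "k = 0") (simp_all add: F_series_def Fk_def Mmat_def)

lemma fps_nth_F_series_0 [simp]: "fps_nth (F_series s) 0 = 1"
  by (simp add: F_series_def Fk_def)

text \<open>Expanding this matrix along its last column gives Newton's identities for the F_k.\<close>

definition Mmat_last_row :: "(nat \<Rightarrow> complex) \<Rightarrow> nat \<Rightarrow> nat \<Rightarrow> complex mat" where
  "Mmat_last_row s k r = mat k k (\<lambda>(i, j).
     if i + 1 = k then s (r - j)
     else if j \<le> i then s (i - j + 1)
     else if j = i + 1 then of_nat (i + 1) else 0)"

lemma Mmat_eq_Mmat_last_row: "Mmat s k = Mmat_last_row s k k"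
  unfolding Mmat_def Mmat_last_row_def by (rule eq_matI) (auto simp: Suc_diff_le)

lemma det_Mmat_last_row_1: "det (Mmat_last_row s (Suc 0) r) = s r"
proof -
  have A: "Mmat_last_row s (Suc 0) r \<in> carrier_mat 1 1" by (simp add: Mmat_last_row_def)
  show ?thesis
    by (subst laplace_expansion_column[OF A, of 0])
       (auto simp: cofactor_def Mmat_last_row_def mat_delete_def)
qed

lemma det_Mmat_last_row_Suc:
  "det (Mmat_last_row s (Suc (Suc k)) r)
     = s (r - Suc k) * det (Mmat s (Suc k)) - of_nat (Suc k) * det (Mmat_last_row s (Suc k) r)"
proof -
  let ?A = "Mmat_last_row s (Suc (Suc k)) r"
  have A: "?A \<in> carrier_mat (Suc (Suc k)) (Suc (Suc k))" by (simp add: Mmat_last_row_def)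
  have minor1: "mat_delete ?A (Suc k) (Suc k) = Mmat s (Suc k)"
    unfolding Mmat_def Mmat_last_row_def mat_delete_def by (rule eq_matI) auto
  have minor2: "mat_delete ?A k (Suc k) = Mmat_last_row s (Suc k) r"
    unfolding Mmat_last_row_def mat_delete_def by (rule eq_matI) auto
  have "det ?A = (\<Sum>i<Suc (Suc k). ?A $$ (i, Suc k) * cofactor ?A i (Suc k))"
    by (rule laplace_expansion_column[OF A]) simp
  also have "\<dots> = ?A $$ (Suc k, Suc k) * cofactor ?A (Suc k) (Suc k)
      + ?A $$ (k, Suc k) * cofactor ?A k (Suc k) + (\<Sum>i<k. ?A $$ (i, Suc k) * cofactor ?A i (Suc k))"
    by (simp add: algebra_simps)
  also have "(\<Sum>i<k. ?A $$ (i, Suc k) * cofactor ?A i (Suc k)) = 0"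
    by (rule sum.neutral) (auto simp: Mmat_last_row_def)
  also have "?A $$ (Suc k, Suc k) = s (r - Suc k)" by (simp add: Mmat_last_row_def)
  also have "?A $$ (k, Suc k) = of_nat (Suc k)" by (simp add: Mmat_last_row_def)
  also have "cofactor ?A (Suc k) (Suc k) = det (Mmat s (Suc k))"
    unfolding cofactor_def minor1 by (simp add: power_add[symmetric] mult_2[symmetric])
  also have "cofactor ?A k (Suc k) = - det (Mmat_last_row s (Suc k) r)"
    unfolding cofactor_def minor2 by simp
  finally show ?thesis by simp
qed

lemma det_Mmat_last_row_eq_sum:
  "(-1) ^ Suc k * det (Mmat_last_row s (Suc k) r) / fact k
     = - (\<Sum>j<Suc k. s (r - j) * fps_nth (F_series s) j)"
proof (induction k)
  case 0
  then show ?case by (simp add: det_Mmat_last_row_1)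
next
  case (Suc k)
  have fact_Suc: "(fact (Suc k) :: complex) = of_nat (Suc k) * fact k" by simp
  have "(-1) ^ Suc (Suc k) * det (Mmat_last_row s (Suc (Suc k)) r) / fact (Suc k)
     = - (s (r - Suc k) * fps_nth (F_series s) (Suc k))
       + (-1) ^ Suc k * det (Mmat_last_row s (Suc k) r) / fact k"
    unfolding det_Mmat_last_row_Suc fps_nth_F_series fact_Suc
    by (simp add: field_simps del: of_nat_Suc)
  with Suc show ?case by simp
qed

lemma F_series_Newton:
  "of_nat (Suc k) * fps_nth (F_series s) (Suc k)
     = - (\<Sum>j<Suc k. s (Suc k - j) * fps_nth (F_series s) j)"
proof -
  have "of_nat (Suc k) * fps_nth (F_series s) (Suc k)
      = (-1) ^ Suc k * det (Mmat_last_row s (Suc k) (Suc k)) / fact k"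
    unfolding fps_nth_F_series Mmat_eq_Mmat_last_row by (simp add: field_simps del: of_nat_Suc)
  then show ?thesis by (simp only: det_Mmat_last_row_eq_sum)
qed

lemma fps_deriv_F_series: "fps_deriv (F_series s) = - Abs_fps (\<lambda>i. s (Suc i)) * F_series s"
proof (rule fps_ext)
  fix k
  have "fps_nth (fps_deriv (F_series s)) k = - (\<Sum>j\<le>k. s (Suc k - j) * fps_nth (F_series s) j)"
    using F_series_Newton[of k s] by (simp add: lessThan_Suc_atMost del: of_nat_Suc)
  also have "(\<Sum>j\<le>k. s (Suc k - j) * fps_nth (F_series s) j)
      = (\<Sum>i=0..k. s (Suc i) * fps_nth (F_series s) (k - i))"
    by (subst sum.atLeastAtMost_rev) (auto simp: atLeast0AtMost Suc_diff_le intro!: sum.cong)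
  finally show "fps_nth (fps_deriv (F_series s)) k
      = fps_nth (- Abs_fps (\<lambda>i. s (Suc i)) * F_series s) k"
    by (simp add: fps_mult_nth)
qed

lemma fps_linear_ode_eq_0:
  fixes Y P L :: "'a::field_char_0 fps"
  assumes ode: "fps_deriv Y * P = L * Y" and "fps_nth Y 0 = 0" and "fps_nth P 0 = 1"
  shows "Y = 0"
proof -
  have "\<forall>i\<le>n. fps_nth Y i = 0" for n
  proof (induction n)
    case 0
    then show ?case using assms(2) by simp
  next
    case (Suc k)
    have "fps_nth (fps_deriv Y * P) k
        = (\<Sum>i=0..<Suc k. of_nat (i+1) * fps_nth Y (i+1) * fps_nth P (k - i))"
      by (simp add: fps_mult_nth atLeastLessThanSuc_atLeastAtMost)
    also have "\<dots> = (\<Sum>i=0..<k. of_nat (i+1) * fps_nth Y (i+1) * fps_nth P (k - i))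
        + of_nat (k+1) * fps_nth Y (k+1)"
      using assms(3) by simp
    also have "(\<Sum>i=0..<k. of_nat (i+1) * fps_nth Y (i+1) * fps_nth P (k - i)) = 0"
      using Suc.IH by (intro sum.neutral) auto
    finally have "fps_nth (fps_deriv Y * P) k = of_nat (k+1) * fps_nth Y (k+1)" by simp
    moreover have "fps_nth (L * Y) k = 0"
      using Suc.IH by (auto simp: fps_mult_nth intro!: sum.neutral)
    ultimately have "fps_nth Y (Suc k) = 0" using ode by (simp del: of_nat_Suc)
    then show ?case using Suc.IH le_Suc_eq by auto
  qed
  then show ?thesis by (intro fps_ext) auto
qed

lemma fps_geometric_mult_linear:
  "Abs_fps (\<lambda>i. a ^ Suc i) * (1 - fps_const (a::'a::comm_ring_1) * fps_X) = fps_const a"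
proof -
  have "Abs_fps (\<lambda>i. a ^ Suc i) * (1 - fps_const a * fps_X)
     = Abs_fps (\<lambda>i. a ^ Suc i) - fps_const a * (fps_X * Abs_fps (\<lambda>i. a ^ Suc i))"
    by (simp add: algebra_simps)
  also have "\<dots> = fps_const a"
    by (rule fps_ext) (auto simp: fps_X_mult_nth power_eq_if)
  finally show ?thesis .
qed

lemma F_series_square:
  fixes a b c d :: complex
  assumes s: "\<And>k. s k = (a ^ k - b ^ k + c ^ k + d ^ k) / 2"
  defines "L \<equiv> \<lambda>\<alpha>. 1 - fps_const \<alpha> * fps_X"
  shows "F_series s ^ 2 * L b = L a * L c * L d"
proof -
  define G where "G = F_series s"
  define S where "S = Abs_fps (\<lambda>i. s (Suc i))"
  have dL: "fps_deriv (L \<alpha>) = - fps_const \<alpha>" for \<alpha> by (simp add: L_def)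
  define Q where "Q = L a * L b * L c * L d"
  define N where "N = fps_const a * (L b * L c * L d) - fps_const b * (L a * L c * L d)
      + fps_const c * (L a * L b * L d) + fps_const d * (L a * L b * L c)"
  have S2: "fps_const 2 * S = Abs_fps (\<lambda>i. a ^ Suc i) - Abs_fps (\<lambda>i. b ^ Suc i)
      + Abs_fps (\<lambda>i. c ^ Suc i) + Abs_fps (\<lambda>i. d ^ Suc i)"
    by (rule fps_ext) (simp add: S_def s)
  have "fps_const 2 * S * Q =
      (Abs_fps (\<lambda>i. a ^ Suc i) * L a) * (L b * L c * L d)
      - (Abs_fps (\<lambda>i. b ^ Suc i) * L b) * (L a * L c * L d)
      + (Abs_fps (\<lambda>i. c ^ Suc i) * L c) * (L a * L b * L d)
      + (Abs_fps (\<lambda>i. d ^ Suc i) * L d) * (L a * L b * L c)"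
    unfolding S2 Q_def by (simp add: algebra_simps)
  then have SQ: "fps_const 2 * S * Q = N"
    unfolding N_def L_def fps_geometric_mult_linear .
  define Lhs where "Lhs = G ^ 2 * L b"
  define Rhs where "Rhs = L a * L c * L d"
  define K where "K = - (N + fps_const b * Rhs)"
  \<comment> \<open>both sides satisfy the same first order linear differential equation\<close>
  have "fps_deriv Lhs * Q = - (fps_const 2 * S * Q) * Lhs - fps_const b * Lhs * Rhs"
    unfolding Lhs_def Q_def Rhs_def G_def
    by (simp add: fps_deriv_F_series dL fps_deriv_power S_def algebra_simps
                  power2_eq_square fps_numeral_fps_const del: fps_const_neg)
  then have dLhs: "fps_deriv Lhs * Q = K * Lhs"
    unfolding SQ K_def by (simp add: algebra_simps)
  have Rhs': "fps_deriv Rhs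
      = - (fps_const a * (L c * L d) + fps_const c * (L a * L d) + fps_const d * (L a * L c))"
    unfolding Rhs_def by (simp add: dL algebra_simps del: fps_const_neg)
  have dRhs: "fps_deriv Rhs * Q = K * Rhs"
    unfolding Rhs' by (simp add: K_def N_def Rhs_def Q_def algebra_simps del: fps_const_neg)
  have "Lhs - Rhs = 0"
  proof (rule fps_linear_ode_eq_0)
    show "fps_deriv (Lhs - Rhs) * Q = K * (Lhs - Rhs)"
      using dLhs dRhs by (simp add: algebra_simps)
    show "fps_nth (Lhs - Rhs) 0 = 0" "fps_nth Q 0 = 1"
      by (simp_all add: Lhs_def Rhs_def Q_def G_def L_def fps_mult_nth_0 power2_eq_square)
  qed
  then show ?thesis by (simp add: Lhs_def Rhs_def G_def)
qed

lemma fps_of_poly_linear: "fps_of_poly [:1, - a:] = 1 - fps_const (a::complex) * fps_X"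
  by (rule fps_ext) (simp add: coeff_pCons fps_X_nth split: nat.split)

lemma poly_eqI_off_0:
  fixes p q :: "'a::{idom,ring_char_0} poly"
  assumes "\<And>t. t \<noteq> 0 \<Longrightarrow> poly p t = poly q t"
  shows "p = q"
proof (rule ccontr)
  assume "p \<noteq> q"
  then have "finite {t. poly (p - q) t = 0}" by (intro poly_roots_finite) simp
  moreover have "UNIV - {0} \<subseteq> {t. poly (p - q) t = 0}" using assms by auto
  ultimately have "finite (UNIV - {0::'a})" by (rule finite_subset[rotated])
  then show False using infinite_UNIV_char_0[where 'a='a] by simp
qed

lemma fps_nth_eq_0_if_mult_eq_fps_X_power:
  fixes U V W :: "'a::field fps"
  assumes "U * V = fps_X ^ N * W" "fps_nth V 0 \<noteq> 0" "k < N"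
  shows "fps_nth U k = 0"
proof -
  have "U = U * V * inverse V" using assms(2) by (simp add: mult.assoc inverse_mult_eq_1')
  also have "\<dots> = fps_X ^ N * (W * inverse V)" using assms(1) by (simp add: mult.assoc)
  finally show ?thesis using assms(3) by (simp add: fps_X_power_mult_nth)
qed

lemma fps_nth_mult_eq_0_below:
  fixes D Q :: "'a::comm_semiring_1 fps"
  assumes "\<And>i. i < N \<Longrightarrow> fps_nth D i = 0" "k < N"
  shows "fps_nth (D * Q) k = 0"
  using assms by (auto simp: fps_mult_nth intro!: sum.neutral)

lemma coprime_linear_poly_left:
  fixes q :: "'a::field_gcd poly"
  assumes "u \<noteq> 0" "\<And>t. poly [:u, v:] t = 0 \<Longrightarrow> poly q t \<noteq> 0"
  shows "coprime [:u, v:] q"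
proof (cases "v = 0")
  case True
  then show ?thesis
    using assms(1)
    by (intro is_unit_left_imp_coprime) (simp add: is_unit_const_poly_iff dvd_field_iff)
next
  case False
  have root: "poly [:u, v:] (- u / v) = 0" using False by simp
  have "\<not> [:u, v:] dvd q"
  proof
    assume "[:u, v:] dvd q"
    then have "poly q (- u / v) = 0" using root by (metis dvd_def mult_eq_0_iff poly_mult)
    with assms(2)[OF root] show False by simp
  qed
  with False show ?thesis by (metis prime_elem_imp_coprime prime_elem_linear_field_poly)
qed

lemma degree_prod_linear: "degree (\<Prod>j<m. [:- f j, 1:] :: 'a::idom poly) = m"
  by (subst degree_prod_sum_eq) auto

lemma lead_coeff_prod_linear: "lead_coeff (\<Prod>j<m. [:- f j, 1:] :: 'a::idom poly) = 1"
  by (simp add: lead_coeff_prod)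

lemma order_prod_linear:
  "order z (\<Prod>j<m. [:- f j, 1:] :: 'a::idom poly) = count (mset (map f [0..<m])) z"
proof -
  have "proots (\<Prod>j<m. [:- f j, 1:] :: 'a poly) = (\<Sum>j<m. {#f j#})"
    by (subst proots_prod) auto
  moreover have "mset (map f [0..<m]) = (\<Sum>j<m. {#f j#})"
    by (induction m) auto
  ultimately show ?thesis
    using count_proots[of "\<Prod>j<m. [:- f j, 1:]" z] by (simp add: prod_zero_iff)
qed

lemma coprime_reflect_prod_linear:
  fixes x :: "nat \<Rightarrow> complex"
  assumes "c \<noteq> 0" "\<And>j. j < m \<Longrightarrow> x j \<noteq> a"
  shows "coprime (reflect_poly (\<Prod>j<m. [:- x j, 1:])) (monom c N * [:1, - a:])"
proof -
  have reflect: "reflect_poly (\<Prod>j<m. [:- x j, 1:]) = (\<Prod>j<m. [:1, - x j:])"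
    by (simp add: reflect_poly_prod reflect_poly_pCons' monom_Suc monom_0)
  have factors: "coprime [:1, - x j:] (monom c N * [:1, - a:])" if "j < m" for j
  proof (rule coprime_linear_poly_left)
    fix t
    assume "poly [:1, - x j:] t = 0"
    then have "t \<noteq> 0" "x j * t = 1" by (auto simp: algebra_simps)
    moreover have "a * t \<noteq> x j * t" using assms(2)[OF that] \<open>t \<noteq> 0\<close> by simp
    ultimately show "poly (monom c N * [:1, - a:]) t \<noteq> 0"
      using assms(1) by (simp add: poly_monom mult.commute)
  qed simp
  show ?thesis
    unfolding reflect by (rule prod_coprime_left) (rule factors, simp)
qed

lemma monom_sum_eq_smult:
  fixes p :: "'a::comm_ring_1 poly"
  assumes "degree p = m" "coeff p m = 1"
  shows "monom D m + (\<Sum>i\<in>{1..m}. monom (D * coeff p (m - i)) (m - i)) = smult D p"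
proof -
  have "(\<Sum>i\<in>{1..m}. monom (D * coeff p (m - i)) (m - i)) = (\<Sum>k<m. monom (D * coeff p k) k)"
    by (rule sum.reindex_bij_witness[of _ "\<lambda>k. m - k" "\<lambda>i. m - i"]) auto
  then have "monom D m + (\<Sum>i\<in>{1..m}. monom (D * coeff p (m - i)) (m - i))
      = (\<Sum>k\<le>m. monom (D * coeff p k) k)"
    using assms(2) by (simp add: lessThan_Suc_atMost[symmetric])
  also have "\<dots> = smult D (\<Sum>k\<le>m. monom (coeff p k) k)"
    by (induction m) (simp_all add: smult_add_right smult_monom)
  also have "(\<Sum>k\<le>m. monom (coeff p k) k) = p"
    using assms(1) by (intro poly_as_sum_of_monoms') simp
  finally show ?thesis .
qed

lemma index_Fmat:
  assumes "i < \<mu>" "j < \<mu>" "j \<le> \<nu> + i"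
  shows "Fmat s \<nu> \<mu> $$ (i, j) = fps_nth (F_series s) (\<nu> + i - j)"
proof -
  have "int \<nu> + int i - int j = int (\<nu> + i - j)" using assms(3) by simp
  then show ?thesis using assms by (simp add: Fmat_def F_series_def)
qed

lemma index_Fmat_mult_vec:
  assumes "v \<in> carrier_vec \<mu>" "i < \<mu>" "\<mu> \<le> Suc \<nu>"
  shows "(Fmat s \<nu> \<mu> *\<^sub>v v) $ i = (\<Sum>j<\<mu>. fps_nth (F_series s) (\<nu> + i - j) * v $ j)"
proof -
  have "(Fmat s \<nu> \<mu> *\<^sub>v v) $ i = (\<Sum>j<\<mu>. Fmat s \<nu> \<mu> $$ (i, j) * v $ j)"
    using assms by (simp add: Fmat_def scalar_prod_def lessThan_atLeast0)
  also have "\<dots> = (\<Sum>j<\<mu>. fps_nth (F_series s) (\<nu> + i - j) * v $ j)"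
    using assms by (intro sum.cong refl) (simp add: index_Fmat)
  finally show ?thesis .
qed

lemma fps_nth_mult_F_series_eq_Fmat:
  fixes Q :: "complex poly"
  assumes "degree Q \<le> m" "i < m"
  shows "fps_nth (fps_of_poly Q * F_series s) (m + 2 + i)
      = coeff Q 0 * fps_nth (F_series s) (m + 2 + i)
        + (Fmat s (m + 1) m *\<^sub>v vec m (\<lambda>j. coeff Q (Suc j))) $ i"
proof -
  have "fps_nth (fps_of_poly Q * F_series s) (m + 2 + i)
      = (\<Sum>j=0..m + 2 + i. coeff Q j * fps_nth (F_series s) (m + 2 + i - j))"
    by (simp add: fps_mult_nth)
  also have "\<dots> = (\<Sum>j<Suc m. coeff Q j * fps_nth (F_series s) (m + 2 + i - j))"
    unfolding lessThan_Suc_atMost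
    by (rule sum.mono_neutral_right) (use assms in \<open>auto simp: coeff_eq_0\<close>)
  also have "\<dots> = coeff Q 0 * fps_nth (F_series s) (m + 2 + i)
      + (\<Sum>j<m. coeff Q (Suc j) * fps_nth (F_series s) (m + 1 + i - j))"
    by (simp only: sum.lessThan_Suc_shift) simp
  also have "(\<Sum>j<m. coeff Q (Suc j) * fps_nth (F_series s) (m + 1 + i - j))
      = (Fmat s (m + 1) m *\<^sub>v vec m (\<lambda>j. coeff Q (Suc j))) $ i"
    using assms(2) by (simp add: index_Fmat_mult_vec mult.commute)
  finally show ?thesis .
qed

lemma det_Fmat_i_Cramer:
  assumes sys: "Fmat s \<nu> \<mu> *\<^sub>v v = vec \<mu> (\<lambda>i. - Fk s (int \<nu> + int i + 1))"
    and v: "v \<in> carrier_vec \<mu>" and l: "l \<in> {1..\<mu>}"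
  shows "det (Fmat_i s \<nu> \<mu> l) = v $ (l - 1) * det (Fmat s \<nu> \<mu>)"
proof -
  have F: "Fmat s \<nu> \<mu> \<in> carrier_mat \<mu> \<mu>" by (simp add: Fmat_def)
  have "Fmat_i s \<nu> \<mu> l = replace_col (Fmat s \<nu> \<mu>) (Fmat s \<nu> \<mu> *\<^sub>v v) (l - 1)"
    unfolding sys using l by (intro eq_matI) (auto simp: Fmat_i_def Fmat_def replace_col_def)
  also have "det \<dots> = v $ (l - 1) * det (Fmat s \<nu> \<mu>)"
    using l by (intro cramer_lemma_mat[OF F v]) auto
  finally show ?thesis .
qed

lemma pade_residual_eq_0:
  fixes G :: "complex fps" and Cp Pb Xr Ar R :: "complex poly"
  assumes identity: "smult K (Cp * Xr ^ 2 - Pb * Ar ^ 2) = monom c N * R"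
    and square: "fps_of_poly Cp = G ^ 2 * fps_of_poly Pb"
    and "K \<noteq> 0" "coeff Pb 0 = 1" "coeff Xr 0 = 1" "coeff Ar 0 = 1" "fps_nth G 0 = 1"
    and "k < N"
  shows "fps_nth (fps_of_poly Xr * G - fps_of_poly Ar) k = 0"
proof (rule fps_nth_eq_0_if_mult_eq_fps_X_power)
  let ?X = "fps_of_poly Xr" and ?A = "fps_of_poly Ar" and ?B = "fps_of_poly Pb"
  have "fps_const K * (fps_of_poly Cp * ?X ^ 2 - ?B * ?A ^ 2)
      = fps_X ^ N * (fps_const c * fps_of_poly R)"
    using arg_cong[OF identity, of fps_of_poly]
    by (simp add: fps_of_poly_smult fps_of_poly_diff fps_of_poly_mult fps_of_poly_power
                  fps_of_poly_monom ac_simps)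
  then show "(?X * G - ?A) * (fps_const K * ?B * (?X * G + ?A))
      = fps_X ^ N * (fps_const c * fps_of_poly R)"
    unfolding square by (simp add: algebra_simps power2_eq_square)
  show "fps_nth (fps_const K * ?B * (?X * G + ?A)) 0 \<noteq> 0"
    using assms by (simp add: fps_mult_nth_0)
qed (rule assms)

lemma pade_cross_eq:
  fixes Xr Ar E B :: "'a::comm_ring_1 poly" and G :: "'a fps"
  assumes X: "\<And>k. k < N \<Longrightarrow> fps_nth (fps_of_poly Xr * G - fps_of_poly Ar) k = 0"
    and E: "\<And>k. k < N \<Longrightarrow> fps_nth (fps_of_poly E * G - fps_of_poly B) k = 0"
    and deg: "degree (Ar * E - B * Xr) < N"
  shows "Ar * E = B * Xr"
proof -
  have fps: "fps_of_poly (Ar * E - B * Xr) =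
      (fps_of_poly E * G - fps_of_poly B) * fps_of_poly Xr
      - (fps_of_poly Xr * G - fps_of_poly Ar) * fps_of_poly E"
    by (simp add: fps_of_poly_diff fps_of_poly_mult algebra_simps)
  have "coeff (Ar * E - B * Xr) k = 0" for k
  proof (cases "k < N")
    case True
    then show ?thesis
      using arg_cong[OF fps, of "\<lambda>F. fps_nth F k"]
        fps_nth_mult_eq_0_below[OF X] fps_nth_mult_eq_0_below[OF E]
      by simp
  next
    case False
    then show ?thesis using deg by (intro coeff_eq_0) simp
  qed
  then show ?thesis by (metis eq_iff_diff_eq_0 poly_eqI coeff_0)
qed

lemma dvd_if_cross_eq:
  fixes Cp Pb Xr Ar E B S :: "complex poly"
  assumes "smult K (Cp * Xr ^ 2 - Pb * Ar ^ 2) = S" "coprime Xr S" "Ar * E = B * Xr"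
  shows "Xr dvd E"
proof -
  have "S * E = smult K (Cp * Xr ^ 2 * E - Pb * Ar * (Ar * E))"
    unfolding assms(1)[symmetric] by (simp add: algebra_simps power2_eq_square)
  also have "\<dots> = Xr * smult K (Cp * Xr * E - Pb * Ar * B)"
    unfolding assms(3) by (simp add: algebra_simps power2_eq_square)
  finally have "Xr dvd S * E" by (metis dvd_triv_left)
  with assms(2) show ?thesis using coprime_dvd_mult_right_iff by blast
qed

text \<open>With Cp = G^2 Pb for G = F_series s, the identity factors as
  (Xr G - Ar) (K Pb (Xr G + Ar)) = c t^(2m+2) R, so Ar / Xr is a Pade approximant of G.\<close>

locale pade_identity =
  fixes s :: "nat \<Rightarrow> complex" and m :: nat and K c :: complex and Cp Pb R Xr Ar :: "complex poly"
  assumes identity: "smult K (Cp * Xr ^ 2 - Pb * Ar ^ 2) = monom c (2 * m + 2) * R"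
    and square: "fps_of_poly Cp = F_series s ^ 2 * fps_of_poly Pb"
    and K: "K \<noteq> 0" and c: "c \<noteq> 0" and R: "coeff R 0 \<noteq> 0"
    and Cp: "degree Cp \<le> 3" and Pb: "degree Pb \<le> 1" "coeff Pb 0 = 1"
    and Xr: "degree Xr \<le> m" "coeff Xr 0 = 1" and Ar: "degree Ar \<le> m + 1" "coeff Ar 0 = 1"
    and coprime: "coprime Xr (monom c (2 * m + 2) * R)"
begin

lemma residual_eq_0:
  "k < 2 * m + 2 \<Longrightarrow> fps_nth (fps_of_poly Xr * F_series s - fps_of_poly Ar) k = 0"
  using pade_residual_eq_0[OF identity square K Pb(2) Xr(2) Ar(2)] by simp

lemma Fmat_mult_coeffs:
  "Fmat s (m + 1) m *\<^sub>v vec m (\<lambda>j. coeff Xr (Suc j)) = vec m (\<lambda>i. - Fk s (int (m + 1) + int i + 1))"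
proof (rule eq_vecI)
  fix i
  assume "i < dim_vec (vec m (\<lambda>i. - Fk s (int (m + 1) + int i + 1)))"
  then have i: "i < m" by simp
  have "fps_nth (fps_of_poly Xr * F_series s) (m + 2 + i) = fps_nth (fps_of_poly Ar) (m + 2 + i)"
    using residual_eq_0[of "m + 2 + i"] i by simp
  also have "\<dots> = 0" using Ar(1) by (simp add: coeff_eq_0)
  finally have "fps_nth (F_series s) (m + 2 + i)
      + (Fmat s (m + 1) m *\<^sub>v vec m (\<lambda>j. coeff Xr (Suc j))) $ i = 0"
    using fps_nth_mult_F_series_eq_Fmat[OF Xr(1) i, of s] Xr(2) by simp
  moreover have "Fk s (int (m + 1) + int i + 1) = fps_nth (F_series s) (m + 2 + i)"
    by (simp add: F_series_def algebra_simps)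
  ultimately show "(Fmat s (m + 1) m *\<^sub>v vec m (\<lambda>j. coeff Xr (Suc j))) $ i
      = vec m (\<lambda>i. - Fk s (int (m + 1) + int i + 1)) $ i"
    using i by (simp add: eq_neg_iff_add_eq_0 add.commute)
qed (simp add: Fmat_def)

lemma det_Fmat_i_eq_coeff:
  assumes "l \<in> {1..m}"
  shows "det (Fmat_i s (m + 1) m l) = coeff Xr l * det (Fmat s (m + 1) m)"
proof -
  have "det (Fmat_i s (m + 1) m l)
      = vec m (\<lambda>j. coeff Xr (Suc j)) $ (l - 1) * det (Fmat s (m + 1) m)"
    by (rule det_Fmat_i_Cramer[OF Fmat_mult_coeffs _ assms]) simp
  moreover have "vec m (\<lambda>j. coeff Xr (Suc j)) $ (l - 1) = coeff Xr l" using assms by auto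
  ultimately show ?thesis by simp
qed

lemma kernel_eq_0:
  assumes E: "degree E \<le> m" "coeff E 0 = 0" and B: "degree B \<le> m + 1"
    and cross: "Ar * E = B * Xr"
  shows "E = 0"
proof (rule ccontr)
  assume "E \<noteq> 0"
  obtain q where q: "E = Xr * q"
    using dvd_if_cross_eq[OF identity coprime cross] by (elim dvdE)
  have "Xr \<noteq> 0" "Ar \<noteq> 0" "q \<noteq> 0" using Xr(2) Ar(2) q \<open>E \<noteq> 0\<close> by auto
  have "degree q \<noteq> 0"
  proof
    assume "degree q = 0"
    then have "q = [:coeff q 0:]" by (rule degree_0_id[symmetric])
    moreover have "coeff q 0 = 0" using E(2) Xr(2) by (simp add: q coeff_mult_0)
    ultimately show False using \<open>q \<noteq> 0\<close> by simp
  qed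
  then have dXr: "degree Xr + 1 \<le> m"
    using E(1) \<open>Xr \<noteq> 0\<close> \<open>q \<noteq> 0\<close> by (simp add: q degree_mult_eq)
  have "B * Xr = (Ar * q) * Xr" using cross q by (metis mult.assoc mult.commute)
  then have "B = Ar * q" using \<open>Xr \<noteq> 0\<close> mult_right_cancel by blast
  then have dAr: "degree Ar \<le> m"
    using B \<open>degree q \<noteq> 0\<close> \<open>Ar \<noteq> 0\<close> \<open>q \<noteq> 0\<close> by (simp add: degree_mult_eq)
  have "degree (Cp * Xr ^ 2) \<le> 2 * m + 1"
    using degree_mult_le[of Cp "Xr ^ 2"] degree_power_le[of Xr 2] Cp dXr by linarith
  moreover have "degree (Pb * Ar ^ 2) \<le> 2 * m + 1"
    using degree_mult_le[of Pb "Ar ^ 2"] degree_power_le[of Ar 2] Pb(1) dAr by linarith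
  ultimately have "degree (Cp * Xr ^ 2 - Pb * Ar ^ 2) \<le> 2 * m + 1" by (rule degree_diff_le)
  then have "coeff (smult K (Cp * Xr ^ 2 - Pb * Ar ^ 2)) (2 * m + 2) = 0"
    using coeff_eq_0[of "Cp * Xr ^ 2 - Pb * Ar ^ 2" "2 * m + 2"] by (simp del: coeff_diff)
  moreover have "coeff (monom c (2 * m + 2) * R) (2 * m + 2) \<noteq> 0"
    using c R by (simp add: coeff_monom_mult)
  ultimately show False using identity by simp
qed

lemma det_Fmat_neq_0: "det (Fmat s (m + 1) m) \<noteq> 0"
proof
  let ?F = "Fmat s (m + 1) m"
  assume "det ?F = 0"
  then obtain \<eta> where \<eta>: "\<eta> \<in> carrier_vec m" "\<eta> \<noteq> 0\<^sub>v m" "?F *\<^sub>v \<eta> = 0\<^sub>v m"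
    using det_0_iff_vec_prod_zero[of ?F m] by (auto simp: Fmat_def)
  define E where "E = (\<Sum>j<m. monom (\<eta> $ j) (Suc j))"
  have coeff_E: "coeff E k = (\<Sum>j<m. if Suc j = k then \<eta> $ j else 0)" for k
    by (simp add: E_def coeff_sum)
  have E: "degree E \<le> m" "coeff E 0 = 0" "vec m (\<lambda>j. coeff E (Suc j)) = \<eta>"
    using \<eta>(1) by (auto simp: coeff_E intro!: degree_le sum.neutral)
  define EG where "EG = fps_of_poly E * F_series s"
  define B where "B = (\<Sum>k\<le>m + 1. monom (fps_nth EG k) k)"
  have coeff_B: "coeff B k = (if k \<le> m + 1 then fps_nth EG k else 0)" for k
    by (simp add: B_def coeff_sum)
  have degree_B: "degree B \<le> m + 1" by (rule degree_le) (simp add: coeff_B)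
  have "fps_nth (EG - fps_of_poly B) k = 0" if "k < 2 * m + 2" for k
  proof (cases "k \<le> m + 1")
    case False
    define i where "i = k - (m + 2)"
    have i: "k = m + 2 + i" "i < m" using False that unfolding i_def by arith+
    then show ?thesis
      using fps_nth_mult_F_series_eq_Fmat[OF E(1) i(2), of s] \<eta>(3) E by (simp add: EG_def coeff_B)
  qed (simp add: coeff_B)
  moreover have "degree (Ar * E - B * Xr) < 2 * m + 2"
    using degree_mult_le[of Ar E] degree_mult_le[of B Xr] degree_diff_le[of "Ar * E" "2 * m + 1" "B * Xr"]
      Ar(1) E(1) Xr(1) degree_B
    by simp
  ultimately have "Ar * E = B * Xr"
    using pade_cross_eq[OF residual_eq_0] by (simp add: EG_def)
  then have "E = 0" by (rule kernel_eq_0[OF E(1,2) degree_B])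
  then show False using E(3) \<eta>(2) by (simp add: zero_vec_def)
qed

lemma Cramer_poly_eq:
  assumes "degree p = m" "reflect_poly p = Xr"
  shows "monom (det (Fmat s (m + 1) m)) m + (\<Sum>i\<in>{1..m}. monom (det (Fmat_i s (m + 1) m i)) (m - i))
    = smult (det (Fmat s (m + 1) m)) p"
proof -
  let ?F = "Fmat s (m + 1) m"
  have "det (Fmat_i s (m + 1) m i) = det ?F * coeff p (m - i)" if "i \<in> {1..m}" for i
    using det_Fmat_i_eq_coeff[OF that] that assms by (auto simp: coeff_reflect_poly)
  then have "(\<Sum>i\<in>{1..m}. monom (det (Fmat_i s (m + 1) m i)) (m - i))
      = (\<Sum>i\<in>{1..m}. monom (det ?F * coeff p (m - i)) (m - i))"
    by (intro sum.cong) simp_all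
  moreover have "coeff p m = 1" using Xr(2) assms by (metis coeff_0_reflect_poly)
  ultimately show ?thesis using monom_sum_eq_smult[OF assms(1), of "det ?F"] by simp
qed

end

lemma reflected_identity:
  fixes X Y :: "complex poly" and K K' a b c d :: complex
  assumes X: "degree X = m" "lead_coeff X = 1" and Y: "degree Y = m" "lead_coeff Y = 1"
    and eq: "\<And>z. 1 - K * ((z - c) * (z - d) * poly X z ^ 2)
                  = -1 + K' * ((z - a) * (z - b) * poly Y z ^ 2)"
  shows "smult K ([:1, -a:] * [:1, -c:] * [:1, -d:] * reflect_poly X ^ 2
            - [:1, -b:] * ([:1, -a:] * reflect_poly Y) ^ 2) = monom 2 (2 * m + 2) * [:1, -a:]"
proof -
  let ?L = "\<lambda>\<alpha>. [:1, - \<alpha>:] :: complex poly"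
  have R: "smult K' (?L a * ?L b * reflect_poly Y ^ 2) + smult K (?L c * ?L d * reflect_poly X ^ 2)
      = monom 2 (2 * m + 2)"
  proof (rule poly_eqI_off_0)
    fix t :: complex
    assume t: "t \<noteq> 0"
    define z where "z = inverse t"
    have L: "poly (?L \<alpha>) t = t * (z - \<alpha>)" for \<alpha> using t by (simp add: z_def algebra_simps)
    have rX: "poly (reflect_poly X) t = t ^ m * poly X z" and rY: "poly (reflect_poly Y) t = t ^ m * poly Y z"
      using poly_reflect_poly_nz[OF t] X Y by (simp_all add: z_def)
    have key: "K' * ((z - a) * (z - b) * poly Y z ^ 2) + K * ((z - c) * (z - d) * poly X z ^ 2) = 2"
      using eq[of z] by (simp add: algebra_simps)
    have "poly (smult K' (?L a * ?L b * reflect_poly Y ^ 2) + smult K (?L c * ?L d * reflect_poly X ^ 2)) t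
        = t * t * (t ^ m) ^ 2 * (K' * ((z - a) * (z - b) * poly Y z ^ 2) + K * ((z - c) * (z - d) * poly X z ^ 2))"
      unfolding poly_add poly_smult poly_mult poly_power L rX rY by (simp add: algebra_simps power2_eq_square)
    also have "\<dots> = t ^ (2 * m + 2) * 2"
      unfolding key by (simp add: power2_eq_square power_add[symmetric] mult_2)
    finally show "poly (smult K' (?L a * ?L b * reflect_poly Y ^ 2) + smult K (?L c * ?L d * reflect_poly X ^ 2)) t
        = poly (monom 2 (2 * m + 2)) t"
      by (simp add: poly_monom)
  qed
  have "K' + K = 0"
    using arg_cong[OF R, of "\<lambda>p. poly p 0"] X Y by (simp add: poly_monom)
  then have "smult K (?L c * ?L d * reflect_poly X ^ 2 - ?L a * ?L b * reflect_poly Y ^ 2) = monom 2 (2 * m + 2)"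
    using R by (simp add: smult_diff_right eq_neg_iff_add_eq_0[symmetric])
  moreover have "smult K (A * C * D * P ^ 2 - B * (A * Q) ^ 2) = smult K (C * D * P ^ 2 - A * B * Q ^ 2) * A"
    for A B C D P Q :: "complex poly"
    by (simp add: algebra_simps power2_eq_square)
  ultimately show ?thesis by (simp only:)
qed

lemma pade_identity_if_two_forms:
  fixes s x y :: "nat \<Rightarrow> complex" and m :: nat and a b c d K K' :: complex and X Y :: "complex poly"
  assumes X_def: "X = (\<Prod>j<m. [:- x j, 1:])" and Y_def: "Y = (\<Prod>j<m. [:- y j, 1:])"
    and s: "\<And>k. s k = (a ^ k - b ^ k + c ^ k + d ^ k) / 2"
    and two_forms: "\<And>z. 1 - K * ((z - c) * (z - d) * poly X z ^ 2)
                         = -1 + K' * ((z - a) * (z - b) * poly Y z ^ 2)"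
    and "K \<noteq> 0" and "\<And>j. j < m \<Longrightarrow> x j \<noteq> a"
  shows "pade_identity s m K 2 ([:1, -a:] * [:1, -c:] * [:1, -d:]) [:1, -b:] [:1, -a:]
    (reflect_poly X) ([:1, -a:] * reflect_poly Y)"
proof
  have X: "degree X = m" "lead_coeff X = 1" and Y: "degree Y = m" "lead_coeff Y = 1"
    unfolding X_def Y_def by (rule degree_prod_linear lead_coeff_prod_linear)+
  show "smult K ([:1, -a:] * [:1, -c:] * [:1, -d:] * reflect_poly X ^ 2
          - [:1, -b:] * ([:1, -a:] * reflect_poly Y) ^ 2) = monom 2 (2 * m + 2) * [:1, -a:]"
    by (rule reflected_identity[OF X Y two_forms])
  show "fps_of_poly ([:1, -a:] * [:1, -c:] * [:1, -d:]) = F_series s ^ 2 * fps_of_poly [:1, -b:]"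
    using F_series_square[OF s] by (simp add: fps_of_poly_mult fps_of_poly_linear)
  have "degree (p * q * r) \<le> 3"
    if "degree p \<le> 1" "degree q \<le> 1" "degree r \<le> 1" for p q r :: "complex poly"
    using degree_mult_le[of "p * q" r] degree_mult_le[of p q] that by linarith
  then show "degree ([:1, -a:] * [:1, -c:] * [:1, -d:]) \<le> 3" by simp
  show "degree (reflect_poly X) \<le> m" "coeff (reflect_poly X) 0 = 1"
    using degree_reflect_poly_le[of X] X by simp_all
  have "degree [:1, -a:] \<le> 1" by simp
  then show "degree ([:1, -a:] * reflect_poly Y) \<le> m + 1"
    using degree_mult_le[of "[:1, -a:]" "reflect_poly Y"] degree_reflect_poly_le[of Y] Y(1) by linarith
  show "coeff ([:1, -a:] * reflect_poly Y) 0 = 1" using Y by (simp add: coeff_mult_0)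
  show "coprime (reflect_poly X) (monom 2 (2 * m + 2) * [:1, - a:])"
    unfolding X_def by (rule coprime_reflect_prod_linear) (simp_all add: assms)
qed (use assms in simp_all)

theorem theorem2:
  fixes m :: nat and a b c d :: complex and T U :: "complex poly"
    and x y :: "nat \<Rightarrow> complex"
  defines "n \<equiv> 2 * m + 2"
  defines "s \<equiv> (\<lambda>k::nat. (a ^ k - b ^ k + c ^ k + d ^ k) / 2)"
  assumes degT: "degree T = n"
    and degU: "degree U \<le> n - 2"
    and pell: "T ^ 2 - Hpoly a b c d * U ^ 2 = 1"
    and Tx: "\<And>z. poly T z = 1 - 2 * (z - c) * (z - d) * (\<Prod>j<m. (z - x j) ^ 2)
                 / ((a - c) * (a - d) * (\<Prod>j<m. (a - x j) ^ 2))"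
    and Ty: "\<And>z. poly T z = -1 + 2 * (z - a) * (z - b) * (\<Prod>j<m. (z - y j) ^ 2)
                 / ((c - a) * (c - b) * (\<Prod>j<m. (c - y j) ^ 2))"
  shows "det (Fmat s (m + 1) m) \<noteq> 0 \<and>
    (let P = monom (det (Fmat s (m + 1) m)) m
             + (\<Sum>i\<in>{1..m}. monom (det (Fmat_i s (m + 1) m i)) (m - i))
     in P \<noteq> 0 \<and> (\<forall>z. order z P = count (mset (map x [0..<m])) z))"
proof -
  define X where "X = (\<Prod>j<m. [:- x j, 1:] :: complex poly)"
  define Y where "Y = (\<Prod>j<m. [:- y j, 1:] :: complex poly)"
  define K where "K = 2 / ((a - c) * (a - d) * (\<Prod>j<m. (a - x j) ^ 2))"
  define K' where "K' = 2 / ((c - a) * (c - b) * (\<Prod>j<m. (c - y j) ^ 2))"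
  have TX: "poly T z = 1 - K * ((z - c) * (z - d) * poly X z ^ 2)" for z
    using Tx[of z] by (simp add: K_def X_def poly_prod prod_power_distrib)
  have TY: "poly T z = -1 + K' * ((z - a) * (z - b) * poly Y z ^ 2)" for z
    using Ty[of z] by (simp add: K'_def Y_def poly_prod prod_power_distrib)
  have "K \<noteq> 0"
  proof
    assume "K = 0"
    then have "poly T = poly 1" by (simp add: TX fun_eq_iff)
    then show False using degT by (simp add: n_def poly_eq_poly_eq_iff)
  qed
  then have x: "x j \<noteq> a" if "j < m" for j using that by (auto simp: K_def)
  have two_forms:
    "1 - K * ((z - c) * (z - d) * poly X z ^ 2) = -1 + K' * ((z - a) * (z - b) * poly Y z ^ 2)" for z
    using TX TY by metis
  interpret pade_identity s m K 2 "[:1, -a:] * [:1, -c:] * [:1, -d:]" "[:1, -b:]" "[:1, -a:]"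
    "reflect_poly X" "[:1, -a:] * reflect_poly Y"
    by (rule pade_identity_if_two_forms[OF X_def Y_def _ two_forms \<open>K \<noteq> 0\<close> x])
      (simp add: s_def)
  have "X \<noteq> 0" "degree X = m" by (simp_all add: X_def prod_zero_iff degree_prod_linear)
  then show ?thesis
    unfolding Let_def Cramer_poly_eq[OF \<open>degree X = m\<close> refl] using det_Fmat_neq_0
    by (simp add: order_smult X_def order_prod_linear)
qed

end
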